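(* Let $d\ge2$ and let $A$ be a subset of $\Delta\cap B_{\rm o}$. Then (1) $A$ is a germ if and only if $A\subseteq A^*$; (2) $A$ is a maximal germ if and only if $A=A^*$. In particular, a subset of $\Delta$ is a maximal germ if and only if it is a qplex.
   Context: Fix an integer $d\ge 2$. $\langle\cdot,\cdot\rangle$ is the standard inner product on $\mathbb{R}^{d^2}$, $\|\cdot\|$ the Euclidean norm. $\Delta=\{p\in\mathbb{R}^{d^2}: p(i)\ge0,\ \sum_ip(i)=1\}$; $H=\{u\in\mathbb{R}^{d^2}:\sum_i u(i)=1\}$; $c=(1/d^2,\dots,1/d^2)$. For $A\subseteq H$ the polar is $A^*=\{u\in H:\langle u,v\rangle\ge\frac{1}{d(d+1)}\ \forall v\in A\}$. The out-ball is $B_{\rm o}=\{u\in H:\|u-c\|\le r_{\rm o}\}$ with $r_{\rm o}^2=\frac{d-1}{d^2(d+1)}$ (equivalently $\langle u,u\rangle\le\frac{2}{d(d+1)}$). A subset $A\subseteq\Delta$ is a germ if $\frac{1}{d(d+1)}\le\langle p,s\rangle\le\frac{2}{d(d+1)}$ for all $p,s\in A$ (including $p=s$); a germ is maximal if no point of $\Delta$ can be added to it while keeping it a germ. A qplex is a set $Q\subseteq\Delta\cap B_{\rm o}$ with $Q^*=Q$. *)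

theory Defs
  imports Main "HOL-Library.Cardinality" Complex_Main
begin

text \<open>Vectors in R^(d^2) are functions from a finite index type 'n with CARD('n) = d^2.\<close>

definition ip :: "('n::finite \<Rightarrow> real) \<Rightarrow> ('n \<Rightarrow> real) \<Rightarrow> real" where
  "ip u v = (\<Sum>i\<in>UNIV. u i * v i)"

definition vnorm :: "('n::finite \<Rightarrow> real) \<Rightarrow> real" where
  "vnorm u = sqrt (ip u u)"

definition simplex :: "('n::finite \<Rightarrow> real) set" where
  "simplex = {p. (\<forall>i. 0 \<le> p i) \<and> (\<Sum>i\<in>UNIV. p i) = 1}"

definition hyp :: "('n::finite \<Rightarrow> real) set" where
  "hyp = {u. (\<Sum>i\<in>UNIV. u i) = 1}"

definition center :: "'n::finite \<Rightarrow> real" where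
  "center = (\<lambda>i. 1 / real (CARD('n)))"

definition polar :: "nat \<Rightarrow> ('n::finite \<Rightarrow> real) set \<Rightarrow> ('n \<Rightarrow> real) set" where
  "polar d A = {u \<in> hyp. \<forall>v\<in>A. ip u v \<ge> 1 / (real d * (real d + 1))}"

definition outball :: "nat \<Rightarrow> ('n::finite \<Rightarrow> real) set" where
  "outball d = {u \<in> hyp. vnorm (\<lambda>i. u i - center i)
      \<le> sqrt ((real d - 1) / ((real d)^2 * (real d + 1)))}"

definition germ :: "nat \<Rightarrow> ('n::finite \<Rightarrow> real) set \<Rightarrow> bool" where
  "germ d A \<longleftrightarrow> A \<subseteq> simplex \<and>
     (\<forall>p\<in>A. \<forall>s\<in>A. 1 / (real d * (real d + 1)) \<le> ip p s \<and> ip p s \<le> 2 / (real d * (real d + 1)))"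

definition maximal_germ :: "nat \<Rightarrow> ('n::finite \<Rightarrow> real) set \<Rightarrow> bool" where
  "maximal_germ d A \<longleftrightarrow> germ d A \<and> (\<forall>p\<in>simplex. p \<notin> A \<longrightarrow> \<not> germ d (insert p A))"

definition qplex :: "nat \<Rightarrow> ('n::finite \<Rightarrow> real) set \<Rightarrow> bool" where
  "qplex d Q \<longleftrightarrow> Q \<subseteq> simplex \<inter> outball d \<and> polar d Q = Q"

end

theory Submission
  imports Defs "HOL-Analysis.Convex"
begin

text \<open>On the out-ball \<open>\<langle>p, s\<rangle> \<le> (|p|\<^sup>2 + |s|\<^sup>2) / 2 \<le> 2 / (d (d + 1))\<close>, so there the upper
  bound in the definition of a germ is automatic and the lower bound is the polar condition;
  this gives (1). A germ with \<open>A = A\<^sup>*\<close> is maximal, since a point that could be added already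
  satisfies the polar condition. Conversely, for a maximal germ \<open>A\<close> a point \<open>u \<in> A\<^sup>*\<close> lies in
  \<open>A\<close> as soon as \<open>u \<in> \<Delta> \<inter> B\<^sub>o\<close>, and this is shown by testing \<open>u\<close> against points that
  maximality forces into \<open>A\<close>: the point \<open>(d c + e\<^sub>j) / (d + 1)\<close> of the out-sphere has overlap
  at least \<open>1 / (d (d + 1))\<close> with all of \<open>\<Delta>\<close>, which yields \<open>u\<^sub>j \<ge> 0\<close>; and every point of the
  sphere inscribed in \<open>\<Delta>\<close> has overlap at least \<open>1 / d\<^sup>2 - r\<^sub>i r\<^sub>o = 1 / (d (d + 1))\<close> with the
  out-ball by Cauchy-Schwarz, so the one opposite to \<open>u\<close> yields \<open>|u - c| \<le> r\<^sub>o\<close>.\<close>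

abbreviation overlap_lb :: "nat \<Rightarrow> real" where
  "overlap_lb d \<equiv> 1 / (real d * (real d + 1))"

abbreviation overlap_ub :: "nat \<Rightarrow> real" where
  "overlap_ub d \<equiv> 2 / (real d * (real d + 1))"

definition outradius :: "nat \<Rightarrow> real" where
  "outradius d = sqrt ((real d - 1) / ((real d)^2 * (real d + 1)))"

text \<open>The radius \<open>1 / sqrt (N (N - 1))\<close> of the ball inscribed in the simplex of \<open>\<real>\<^sup>N\<close>,
  \<open>N = d\<^sup>2\<close>.\<close>
definition inradius :: "nat \<Rightarrow> real" where
  "inradius d = 1 / (real d * sqrt ((real d)^2 - 1))"

lemma real_sq_gt_one: "d \<ge> 2 \<Longrightarrow> (real d)^2 > 1"
  using mult_mono[of 2 "real d" 2 "real d"] by (simp add: power2_eq_square)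

lemma outradius_sq: "d \<ge> 1 \<Longrightarrow> (outradius d)^2 = (real d - 1) / ((real d)^2 * (real d + 1))"
  unfolding outradius_def by simp

lemma overlap_ub_eq: "d \<ge> 1 \<Longrightarrow> overlap_ub d = 1 / (real d)^2 + (outradius d)^2"
proof -
  assume "d \<ge> 1"
  then have "real d > 0" by simp
  then have "2 / (real d * (real d + 1)) = 1 / (real d)^2 + (real d - 1) / ((real d)^2 * (real d + 1))"
    by (simp add: divide_simps power2_eq_square)
  then show ?thesis using \<open>d \<ge> 1\<close> by (simp add: outradius_sq)
qed

lemma overlap_lb_le: "d \<ge> 1 \<Longrightarrow> overlap_lb d \<le> 1 / (real d)^2"
  by (intro divide_left_mono) (auto simp: power2_eq_square)

lemma inradius_pos: "d \<ge> 2 \<Longrightarrow> inradius d > 0"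
  unfolding inradius_def using real_sq_gt_one[of d] by simp

lemma inradius_sq: "d \<ge> 2 \<Longrightarrow> (inradius d)^2 = 1 / ((real d)^2 * ((real d)^2 - 1))"
  unfolding inradius_def using real_sq_gt_one[of d] by (simp add: power_mult_distrib power_divide)

lemma outradius_eq: "d \<ge> 2 \<Longrightarrow> outradius d = (real d - 1) * inradius d"
proof -
  assume d: "d \<ge> 2"
  have "(real d)^2 - 1 = (real d - 1) * (real d + 1)" by (simp add: algebra_simps power2_eq_square)
  then have "(real d - 1) / ((real d)^2 * (real d + 1)) = (real d - 1)^2 / ((real d)^2 * ((real d)^2 - 1))"
    using d by (simp add: power2_eq_square)
  then show ?thesis
    using d by (simp add: outradius_def inradius_def real_sqrt_divide real_sqrt_mult)
qed

lemma inradius_le_outradius: "d \<ge> 2 \<Longrightarrow> inradius d \<le> outradius d"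
  using inradius_pos[of d] by (simp add: outradius_eq)

lemma inradius_mult_outradius: "d \<ge> 2 \<Longrightarrow> inradius d * outradius d = 1 / (real d)^2 - overlap_lb d"
proof -
  assume d: "d \<ge> 2"
  have "(real d)^2 - 1 = (real d - 1) * (real d + 1)" by (simp add: algebra_simps power2_eq_square)
  then have "(real d - 1) * (1 / ((real d)^2 * ((real d)^2 - 1))) = 1 / (real d)^2 - overlap_lb d"
    using d by (simp add: divide_simps power2_eq_square)
  moreover have "inradius d * outradius d = (real d - 1) * (inradius d)^2"
    using d by (simp add: outradius_eq power2_eq_square)
  ultimately show ?thesis using d by (simp add: inradius_sq)
qed

lemma ip_comm: "ip u v = ip v u"
  unfolding ip_def by (simp add: mult.commute)

lemma ip_self_nonneg: "0 \<le> ip u u"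
  unfolding ip_def by (simp add: sum_nonneg)

lemma vnorm_sq: "(vnorm u)^2 = ip u u"
  unfolding vnorm_def using ip_self_nonneg by simp

lemma abs_ip_le_vnorm_mult: "\<bar>ip u v\<bar> \<le> vnorm u * vnorm v"
proof -
  have "(ip u v)^2 \<le> ip u u * ip v v"
    unfolding ip_def using Cauchy_Schwarz_ineq_sum[of u v UNIV] by (simp add: power2_eq_square)
  then have "\<bar>ip u v\<bar> \<le> sqrt (ip u u * ip v v)"
    using real_sqrt_le_mono by fastforce
  then show ?thesis unfolding vnorm_def by (simp add: real_sqrt_mult)
qed

lemma ip_le_half_sum: "ip u v \<le> (ip u u + ip v v) / 2"
proof -
  have "0 \<le> (\<Sum>i\<in>UNIV. (u i - v i)^2)" by (simp add: sum_nonneg)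
  also have "\<dots> = ip u u + ip v v - 2 * ip u v"
    unfolding ip_def by (simp add: power2_eq_square algebra_simps sum.distrib sum_subtractf sum_distrib_left)
  finally show ?thesis by simp
qed

lemma ip_add_left: "ip (\<lambda>i. u i + v i) w = ip u w + ip v w"
  unfolding ip_def by (simp add: algebra_simps sum.distrib)

lemma ip_diff_left: "ip (\<lambda>i. u i - v i) w = ip u w - ip v w"
  unfolding ip_def by (simp add: algebra_simps sum_subtractf)

lemma ip_scale_left: "ip (\<lambda>i. c * u i) w = c * ip u w"
  unfolding ip_def by (simp add: algebra_simps sum_distrib_left)

lemma ip_center_left: "ip (center :: 'n::finite \<Rightarrow> real) w = (\<Sum>i\<in>UNIV. w i) / real CARD('n)"
  unfolding ip_def center_def by (simp add: sum_divide_distrib)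

lemma sum_center: "(\<Sum>i\<in>UNIV. (center :: 'n::finite \<Rightarrow> real) i) = 1"
  unfolding center_def by simp

lemma ip_center_plus:
  fixes w b :: "'n::finite \<Rightarrow> real"
  assumes w: "(\<Sum>i\<in>UNIV. w i) = 0" and b: "b \<in> hyp"
  shows "ip (\<lambda>i. center i + w i) b = 1 / real CARD('n) + ip w (\<lambda>i. b i - center i)"
proof -
  have "ip w (\<lambda>i. b i - center i) = ip w b"
    using ip_diff_left[of b center w] ip_center_left[of w] w by (simp add: ip_comm)
  then show ?thesis
    using b ip_add_left[of center w b] ip_center_left[of b] by (simp add: hyp_def)
qed

lemma ip_diff_center_self:
  fixes u :: "'n::finite \<Rightarrow> real"
  assumes u: "u \<in> hyp"
  shows "ip (\<lambda>i. u i - center i) (\<lambda>i. u i - center i) = ip u u - 1 / real CARD('n)"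
proof -
  have "(\<Sum>i\<in>UNIV. u i - center i) = 0"
    using u sum_center by (simp add: hyp_def sum_subtractf)
  from ip_center_plus[OF this u] show ?thesis by simp
qed

lemma ip_self_ge_on_hyp: "(u :: 'n::finite \<Rightarrow> real) \<in> hyp \<Longrightarrow> 1 / real CARD('n) \<le> ip u u"
  using ip_diff_center_self ip_self_nonneg[of "\<lambda>i. u i - center i"] by fastforce

lemma hyp_mem_outball_iff:
  fixes u :: "'n::finite \<Rightarrow> real"
  assumes d: "d \<ge> 1" and card: "CARD('n) = d^2" and u: "u \<in> hyp"
  shows "u \<in> outball d \<longleftrightarrow> ip u u \<le> overlap_ub d"
proof -
  have "u \<in> outball d \<longleftrightarrow> ip (\<lambda>i. u i - center i) (\<lambda>i. u i - center i) \<le> (outradius d)^2"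
    using u d unfolding outball_def vnorm_def outradius_sq[OF d] by (simp add: real_sqrt_le_iff)
  then show ?thesis
    using ip_diff_center_self[OF u] overlap_ub_eq[OF d] card by (simp add: diff_le_eq add.commute)
qed

lemma sq_coord_le_of_sum_zero:
  fixes v :: "'n::finite \<Rightarrow> real"
  assumes "(\<Sum>i\<in>UNIV. v i) = 0"
  shows "real CARD('n) * (v j)^2 \<le> (real CARD('n) - 1) * ip v v"
proof -
  let ?B = "UNIV - {j}"
  have "(\<Sum>i\<in>?B. v i)^2 \<le> (\<Sum>i\<in>?B. (v i)^2) * card ?B"
    by (rule sum_squared_le_sum_of_squares)
  moreover have "(\<Sum>i\<in>?B. v i) = - v j"
    using assms sum.remove[of UNIV j v] by simp
  moreover have "(\<Sum>i\<in>?B. (v i)^2) = ip v v - (v j)^2"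
    unfolding ip_def using sum.remove[of UNIV j "\<lambda>i. (v i)^2"] by (simp add: power2_eq_square)
  moreover have "real (card ?B) = real CARD('n) - 1"
    by (simp add: of_nat_diff Suc_leI)
  ultimately have "(v j)^2 \<le> (ip v v - (v j)^2) * (real CARD('n) - 1)" by simp
  then show ?thesis by (simp add: algebra_simps)
qed

lemma center_plus_mem_simplex:
  fixes w :: "'n::finite \<Rightarrow> real"
  assumes w: "(\<Sum>i\<in>UNIV. w i) = 0"
    and small: "real CARD('n) * (real CARD('n) - 1) * ip w w \<le> 1"
  shows "(\<lambda>i. center i + w i) \<in> simplex"
proof -
  let ?N = "real CARD('n)"
  have "0 \<le> center j + w j" for j
  proof -
    have "?N * (?N * (w j)^2) \<le> ?N * ((?N - 1) * ip w w)"
      using sq_coord_le_of_sum_zero[OF w, of j] by (simp add: mult_left_mono)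
    then have "(?N * w j)^2 \<le> 1^2"
      using small by (simp add: power_mult_distrib power2_eq_square algebra_simps)
    then have "- 1 \<le> ?N * w j" using abs_le_square_iff[of "?N * w j" 1] by simp
    then show ?thesis by (simp add: center_def field_simps)
  qed
  moreover have "(\<Sum>i\<in>UNIV. center i + w i) = 1"
    using w sum_center by (simp add: sum.distrib)
  ultimately show ?thesis unfolding simplex_def by simp
qed

lemma simplex_subset_hyp: "simplex \<subseteq> hyp"
  unfolding simplex_def hyp_def by auto

lemma germ_subset_outball:
  fixes A :: "('n::finite \<Rightarrow> real) set"
  assumes d: "d \<ge> 1" and card: "CARD('n) = d^2" and "germ d A"
  shows "A \<subseteq> outball d"
  using assms hyp_mem_outball_iff[OF d card] simplex_subset_hyp unfolding germ_def by blast

lemma germ_iff_subset_polar: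
  fixes A :: "('n::finite \<Rightarrow> real) set"
  assumes d: "d \<ge> 1" and card: "CARD('n) = d^2" and A: "A \<subseteq> simplex \<inter> outball d"
  shows "germ d A \<longleftrightarrow> A \<subseteq> polar d A"
proof
  assume "germ d A"
  then show "A \<subseteq> polar d A"
    using A simplex_subset_hyp unfolding germ_def polar_def by blast
next
  assume polar: "A \<subseteq> polar d A"
  have diag: "ip p p \<le> overlap_ub d" if "p \<in> A" for p
    using that A hyp_mem_outball_iff[OF d card] simplex_subset_hyp by blast
  have "ip p s \<le> overlap_ub d" if "p \<in> A" "s \<in> A" for p s
    using ip_le_half_sum[of p s] diag[OF that(1)] diag[OF that(2)] by argo
  with polar A show "germ d A"
    unfolding germ_def polar_def by blast
qed

lemma germ_insert:
  fixes A :: "('n::finite \<Rightarrow> real) set"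
  assumes d: "d \<ge> 1" and card: "CARD('n) = d^2" and A: "germ d A"
    and x: "x \<in> simplex \<inter> outball d" "x \<in> polar d A"
  shows "germ d (insert x A)"
proof -
  have sub: "insert x A \<subseteq> simplex \<inter> outball d"
    using A x germ_subset_outball[OF d card A] unfolding germ_def by blast
  have "overlap_lb d \<le> 1 / real CARD('n)"
    using overlap_lb_le[OF d] card by simp
  also have "\<dots> \<le> ip x x"
    using x simplex_subset_hyp ip_self_ge_on_hyp by blast
  finally have "x \<in> polar d (insert x A)"
    using x unfolding polar_def by blast
  moreover have "A \<subseteq> polar d (insert x A)"
    using x A germ_iff_subset_polar[OF d card] sub by (auto simp: polar_def ip_comm)
  ultimately show ?thesis
    using germ_iff_subset_polar[OF d card sub] by (auto simp: polar_def)
qed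

lemma maximal_germ_absorbs:
  fixes A :: "('n::finite \<Rightarrow> real) set"
  assumes d: "d \<ge> 1" and card: "CARD('n) = d^2" and A: "maximal_germ d A"
    and x: "x \<in> simplex \<inter> outball d" "x \<in> polar d A"
  shows "x \<in> A"
  using A germ_insert[OF d card _ x] x unfolding maximal_germ_def by blast

lemma polar_antimono: "A \<subseteq> B \<Longrightarrow> polar d B \<subseteq> polar d A"
  unfolding polar_def by blast

text \<open>The point \<open>(d c + e\<^sub>j) / (d + 1)\<close> where the segment from the center \<open>c\<close> to the
  vertex \<open>e\<^sub>j\<close> of the simplex leaves the out-ball.\<close>
definition toward_vertex :: "nat \<Rightarrow> 'n \<Rightarrow> 'n \<Rightarrow> real" where
  "toward_vertex d j = (\<lambda>i. overlap_lb d + (if i = j then 1 / (real d + 1) else 0))"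

lemma ip_toward_vertex:
  "ip (toward_vertex d j) b = overlap_lb d * (\<Sum>i\<in>UNIV. b i) + b j / (real d + 1)"
proof -
  have "ip (toward_vertex d j) b
      = (\<Sum>i\<in>UNIV. overlap_lb d * b i + (if i = j then b i / (real d + 1) else 0))"
    unfolding ip_def toward_vertex_def by (rule sum.cong) (auto simp: algebra_simps)
  then show ?thesis by (simp add: sum.distrib sum_distrib_left)
qed

lemma toward_vertex_mem:
  fixes j :: "'n::finite"
  assumes d: "d \<ge> 1" and card: "CARD('n) = d^2"
  shows "toward_vertex d j \<in> simplex \<inter> outball d" and "toward_vertex d j \<in> polar d simplex"
proof -
  have pos: "real d > 0" using d by simp
  have "(\<Sum>i\<in>UNIV. toward_vertex d j i) = (real d)^2 * overlap_lb d + 1 / (real d + 1)"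
    unfolding toward_vertex_def using card by (simp add: sum.distrib)
  also have "\<dots> = 1"
    using pos by (simp add: divide_simps power2_eq_square)
  finally have sum_q: "(\<Sum>i\<in>UNIV. toward_vertex d j i) = 1" .
  then have simplex: "toward_vertex d j \<in> simplex"
    using pos unfolding simplex_def toward_vertex_def by auto
  have "ip (toward_vertex d j) (toward_vertex d j) = overlap_ub d"
    using pos unfolding ip_toward_vertex sum_q by (simp add: toward_vertex_def divide_simps)
  then show "toward_vertex d j \<in> simplex \<inter> outball d"
    using hyp_mem_outball_iff[OF d card] simplex simplex_subset_hyp by auto
  have "overlap_lb d \<le> ip (toward_vertex d j) b" if "b \<in> simplex" for b
    using that unfolding ip_toward_vertex simplex_def by simp
  then show "toward_vertex d j \<in> polar d simplex"
    using simplex simplex_subset_hyp unfolding polar_def by blast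
qed

lemma polar_of_maximal_germ_nonneg:
  fixes A :: "('n::finite \<Rightarrow> real) set"
  assumes d: "d \<ge> 1" and card: "CARD('n) = d^2" and A: "maximal_germ d A"
    and u: "u \<in> polar d A"
  shows "0 \<le> u j"
proof -
  have "A \<subseteq> simplex" using A unfolding maximal_germ_def germ_def by simp
  then have "toward_vertex d j \<in> polar d A"
    using toward_vertex_mem(2)[OF d card] polar_antimono by blast
  then have "toward_vertex d j \<in> A"
    using maximal_germ_absorbs[OF d card A] toward_vertex_mem(1)[OF d card] by blast
  then have "overlap_lb d \<le> ip u (toward_vertex d j)"
    using u unfolding polar_def by blast
  also have "\<dots> = overlap_lb d + u j / (real d + 1)"
    using u ip_comm[of u] unfolding polar_def hyp_def by (simp add: ip_toward_vertex)
  finally show ?thesis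
    by (simp add: zero_le_divide_iff)
qed

lemma center_plus_inradius_mem_simplex_outball:
  fixes w :: "'n::finite \<Rightarrow> real"
  assumes d: "d \<ge> 2" and card: "CARD('n) = d^2"
    and w: "(\<Sum>i\<in>UNIV. w i) = 0" "ip w w = (inradius d)^2"
  shows "(\<lambda>i. center i + w i) \<in> simplex \<inter> outball d"
proof -
  have N: "real CARD('n) = (real d)^2" using card by simp
  have "real CARD('n) * (real CARD('n) - 1) * ip w w = 1"
    using w(2) N real_sq_gt_one[OF d] d unfolding inradius_sq[OF d]
    by (simp add: less_imp_neq[symmetric])
  then have simplex: "(\<lambda>i. center i + w i) \<in> simplex"
    by (intro center_plus_mem_simplex w(1)) simp
  then have hyp: "(\<lambda>i. center i + w i) \<in> hyp" using simplex_subset_hyp by blast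
  have "ip (\<lambda>i. center i + w i) (\<lambda>i. center i + w i) = 1 / (real d)^2 + (inradius d)^2"
    using ip_center_plus[OF w(1) hyp] w(2) N by simp
  also have "\<dots> \<le> overlap_ub d"
    using inradius_le_outradius[OF d] inradius_pos[OF d] overlap_ub_eq[of d] d
    by (simp add: power_mono)
  moreover have "d \<ge> 1" using d by simp
  ultimately show ?thesis
    using hyp_mem_outball_iff[OF _ card hyp] simplex by simp
qed

lemma center_plus_inradius_mem_polar_outball:
  fixes w :: "'n::finite \<Rightarrow> real"
  assumes d: "d \<ge> 2" and card: "CARD('n) = d^2"
    and w: "(\<Sum>i\<in>UNIV. w i) = 0" "ip w w = (inradius d)^2"
  shows "(\<lambda>i. center i + w i) \<in> polar d (outball d)"
proof -
  have vnorm_w: "vnorm w = inradius d"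
    using w(2) inradius_pos[OF d] unfolding vnorm_def by simp
  have "overlap_lb d \<le> ip (\<lambda>i. center i + w i) b" if b: "b \<in> outball d" for b
  proof -
    let ?v = "\<lambda>i. b i - center i"
    have b_hyp: "b \<in> hyp" using b unfolding outball_def by simp
    have "inradius d * vnorm ?v \<le> inradius d * outradius d"
      using b inradius_pos[OF d] unfolding outball_def outradius_def by (simp add: mult_left_mono)
    then have "- ip w ?v \<le> inradius d * outradius d"
      using abs_ip_le_vnorm_mult[of w ?v, unfolded vnorm_w] by linarith
    then show ?thesis
      using ip_center_plus[OF w(1) b_hyp] inradius_mult_outradius[OF d] card by simp
  qed
  moreover have "(\<lambda>i. center i + w i) \<in> hyp"
    using center_plus_inradius_mem_simplex_outball[OF assms] simplex_subset_hyp by blast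
  ultimately show ?thesis unfolding polar_def by blast
qed

lemma polar_of_maximal_germ_in_outball:
  fixes A :: "('n::finite \<Rightarrow> real) set"
  assumes d: "d \<ge> 2" and card: "CARD('n) = d^2" and A: "maximal_germ d A"
    and u: "u \<in> polar d A"
  shows "u \<in> outball d"
proof -
  define v where "v = (\<lambda>i. u i - center i)"
  define n where "n = vnorm v"
  define \<rho> where "\<rho> = inradius d"
  have d1: "d \<ge> 1" using d by simp
  have u_hyp: "u \<in> hyp" using u unfolding polar_def by simp
  have sum_v: "(\<Sum>i\<in>UNIV. v i) = 0"
    using u_hyp sum_center unfolding v_def hyp_def by (simp add: sum_subtractf)
  have "n \<le> outradius d"
  proof (rule ccontr)
    assume "\<not> n \<le> outradius d"
    then have n_gt: "n > outradius d" by simp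
    then have n_pos: "n > 0" using inradius_pos[OF d] inradius_le_outradius[OF d] by linarith
    define w where "w = (\<lambda>i. - (\<rho> / n) * v i)"
    define a where "a = (\<lambda>i. center i + w i)"
    have sum_w: "(\<Sum>i\<in>UNIV. w i) = 0"
      unfolding w_def sum_distrib_left[symmetric] sum_v by simp
    have ip_w: "ip w z = - (\<rho> / n) * ip v z" for z
      unfolding w_def by (rule ip_scale_left)
    have "ip w w = (\<rho> / n)^2 * n^2"
      using ip_w[of w] ip_w[of v] ip_comm[of v w] vnorm_sq[of v]
      unfolding n_def by (simp add: power2_eq_square)
    then have ip_ww: "ip w w = (inradius d)^2"
      using n_pos unfolding \<rho>_def by (simp add: power_divide)
    have "A \<subseteq> outball d"
      using germ_subset_outball[OF d1 card] A unfolding maximal_germ_def by simp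
    then have "a \<in> polar d A"
      using center_plus_inradius_mem_polar_outball[OF d card sum_w ip_ww] polar_antimono
      unfolding a_def by blast
    then have "a \<in> A"
      using maximal_germ_absorbs[OF d1 card A]
        center_plus_inradius_mem_simplex_outball[OF d card sum_w ip_ww]
      unfolding a_def by blast
    then have "overlap_lb d \<le> ip a u"
      using u unfolding polar_def by (simp add: ip_comm)
    also have "ip a u = 1 / (real d)^2 - \<rho> * n"
      using ip_center_plus[OF sum_w u_hyp] ip_w[of v] vnorm_sq[of v, symmetric] n_pos card
      unfolding a_def v_def[symmetric] n_def[symmetric] by (simp add: power2_eq_square)
    finally have "\<rho> * n \<le> \<rho> * outradius d"
      using inradius_mult_outradius[OF d] unfolding \<rho>_def by simp
    then show False
      using n_gt inradius_pos[OF d] unfolding \<rho>_def by simp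
  qed
  then show ?thesis
    using u_hyp unfolding outball_def outradius_def n_def v_def by simp
qed

lemma polar_of_maximal_germ_subset:
  fixes A :: "('n::finite \<Rightarrow> real) set"
  assumes d: "d \<ge> 2" and card: "CARD('n) = d^2" and A: "maximal_germ d A"
  shows "polar d A \<subseteq> A"
proof
  fix u assume u: "u \<in> polar d A"
  have d1: "d \<ge> 1" using d by simp
  have "u \<in> simplex"
    using u polar_of_maximal_germ_nonneg[OF d1 card A] unfolding polar_def simplex_def hyp_def by auto
  then show "u \<in> A"
    using maximal_germ_absorbs[OF d1 card A] polar_of_maximal_germ_in_outball[OF d card A u] u
    by simp
qed

lemma maximal_germ_iff_eq_polar:
  fixes A :: "('n::finite \<Rightarrow> real) set"
  assumes d: "d \<ge> 2" and card: "CARD('n) = d^2" and A: "A \<subseteq> simplex \<inter> outball d"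
  shows "maximal_germ d A \<longleftrightarrow> A = polar d A"
proof
  assume A_max: "maximal_germ d A"
  then have "A \<subseteq> polar d A"
    using d germ_iff_subset_polar[OF _ card A] unfolding maximal_germ_def by simp
  then show "A = polar d A"
    using polar_of_maximal_germ_subset[OF d card A_max] by (rule subset_antisym)
next
  assume A_eq: "A = polar d A"
  then have "germ d A"
    using d germ_iff_subset_polar[OF _ card A] by simp
  moreover have "\<not> germ d (insert p A)" if "p \<in> simplex" "p \<notin> A" for p
  proof
    assume "germ d (insert p A)"
    then have "p \<in> polar d A"
      using that(1) simplex_subset_hyp unfolding germ_def polar_def by blast
    with A_eq that(2) show False by blast
  qed
  ultimately show "maximal_germ d A"
    unfolding maximal_germ_def by blast
qed

theorem mainTheorem3:
  fixes d :: nat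
  assumes "d \<ge> 2" and "CARD('n::finite) = d^2"
  shows "(\<forall>A :: ('n \<Rightarrow> real) set. A \<subseteq> simplex \<inter> outball d \<longrightarrow>
            ((germ d A \<longleftrightarrow> A \<subseteq> polar d A) \<and> (maximal_germ d A \<longleftrightarrow> A = polar d A)))
       \<and> (\<forall>A :: ('n \<Rightarrow> real) set. A \<subseteq> simplex \<longrightarrow> (maximal_germ d A \<longleftrightarrow> qplex d A))"
proof -
  have d1: "d \<ge> 1" using assms(1) by simp
  have "maximal_germ d A \<longleftrightarrow> qplex d A" if A: "A \<subseteq> simplex" for A :: "('n \<Rightarrow> real) set"
  proof
    assume A_max: "maximal_germ d A"
    then have "A \<subseteq> outball d"
      using germ_subset_outball[OF d1 assms(2)] unfolding maximal_germ_def by simp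
    with A A_max show "qplex d A"
      using maximal_germ_iff_eq_polar[OF assms] unfolding qplex_def by simp
  qed (use maximal_germ_iff_eq_polar[OF assms] in \<open>simp add: qplex_def\<close>)
  then show ?thesis
    using germ_iff_subset_polar[OF d1 assms(2)] maximal_germ_iff_eq_polar[OF assms] by blast
qed

end
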